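(* Let $b,c\in Z^{10}$ with $\sum_i b_i=\sum_i c_i=0$, and assume $t\nmid B_i$ and $t\nmid C_i$ for all odd $i$. Let $l$ be odd such that $t\mid B_l+B_{l+2}$ and $t\nmid B_i+B_{i+2}$ for all odd $i\neq l$, and likewise $t\mid C_l+C_{l+2}$ and $t\nmid C_i+C_{i+2}$ for all odd $i\neq l$ (indices mod $10$). Then $\mathbb{M}(b)\cong\mathbb{M}(c)$ as $B_{5,10}$-modules if and only if $$t\mid (B_{l-2}+B_l)\,C_l\,B_{l+4}\,C_{l+6}-(C_{l-2}+C_l)\,B_l\,C_{l+4}\,B_{l+6}.$$
   Context: Let $Z=\mathbb{C}[[t]]$. Let $\Gamma_{10}$ be the quiver with vertices $0,1,\dots,9$ (indices taken mod $10$) on a cycle and arrows $x_i\colon i-1\to i$, $y_i\colon i\to i-1$ for $i=1,\dots,10$. Let $B_{5,10}$ be the completed path algebra of $\Gamma_{10}$ modulo the closed ideal generated by $xy=yx$ and $x^5=y^5$ at every vertex. For $b=(b_1,\dots,b_{10})\in Z^{10}$ with $\sum_i b_i=0$, the $B_{5,10}$-module $\mathbb{M}(b)$ has $V_i=Z\oplus Z$ at every vertex, and for odd $j$: $x_j=\begin{pmatrix} t& b_j\\ 0&1\end{pmatrix}$, $y_j=\begin{pmatrix} 1&-b_j\\0&t\end{pmatrix}$; for even $j$: $x_j=\begin{pmatrix}1&b_j\\0&t\end{pmatrix}$, $y_j=\begin{pmatrix}t&-b_j\\0&1\end{pmatrix}$. An isomorphism $\mathbb{M}(b)\to\mathbb{M}(c)$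 is a family of invertible $Z$-linear maps $\varphi_i\colon Z^2\to Z^2$ commuting with all $x_i$ and $y_i$. For odd $i$ write $B_i=b_i+b_{i+1}$ and $C_i=c_i+c_{i+1}$ (indices mod $10$). *)

theory Defs
  imports "HOL-Analysis.Analysis" "HOL-Computational_Algebra.Formal_Power_Series"
begin

text \<open>Z = C[[t]] is the type complex fps; t is fps_X.
  A Z-linear endomorphism of Z^2 is a 2x2 matrix over Z (acting on column vectors).\<close>

type_synonym Zmat = "complex fps ^ 2 ^ 2"

definition mat2 :: "complex fps \<Rightarrow> complex fps \<Rightarrow> complex fps \<Rightarrow> complex fps \<Rightarrow> Zmat" where
  "mat2 a b c d = vector [vector [a, b], vector [c, d]]"

text \<open>Cyclic indexing: a tuple (b_1,...,b_10) is a function on int, read at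
  the representative of j mod 10 in {1..10}.\<close>
definition cyc :: "(int \<Rightarrow> 'a) \<Rightarrow> int \<Rightarrow> 'a" where
  "cyc b j = b (((j - 1) mod 10) + 1)"

definition Bsum :: "(int \<Rightarrow> complex fps) \<Rightarrow> int \<Rightarrow> complex fps" where
  "Bsum b i = cyc b i + cyc b (i + 1)"

text \<open>The arrow maps of M(b): x_j : V_{j-1} -> V_j, y_j : V_j -> V_{j-1}.\<close>
definition xmap :: "(int \<Rightarrow> complex fps) \<Rightarrow> int \<Rightarrow> Zmat" where
  "xmap b j = (if odd j then mat2 fps_X (cyc b j) 0 1 else mat2 1 (cyc b j) 0 fps_X)"

definition ymap :: "(int \<Rightarrow> complex fps) \<Rightarrow> int \<Rightarrow> Zmat" where
  "ymap b j = (if odd j then mat2 1 (- cyc b j) 0 fps_X else mat2 fps_X (- cyc b j) 0 1)"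

definition Miso :: "(int \<Rightarrow> complex fps) \<Rightarrow> (int \<Rightarrow> complex fps) \<Rightarrow> bool" where
  "Miso b c \<longleftrightarrow> (\<exists>\<phi> :: int \<Rightarrow> Zmat.
     (\<forall>i \<in> {0..9}. invertible (\<phi> i)) \<and>
     (\<forall>j \<in> {1..10}. \<phi> (j mod 10) ** xmap b j = xmap c j ** \<phi> (j - 1) \<and>
                     \<phi> (j - 1) ** ymap b j = ymap c j ** \<phi> (j mod 10)))"

end

theory Submission
  imports Defs
begin

(* Comparing entries in \<phi>_j x_j = x_j \<phi>_{j-1} along the two arrows between consecutive even
   vertices shows that the (2,1) entries at the odd vertices are all one series \<rho>, and that
   modulo t the diagonal of \<phi>_{2k} moves by the partial sums S_k = B_1 + B_3 + ... + B_{2k-1}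
   and T_k = C_1 + C_3 + ... + C_{2k-1}.  The (1,2) entries can be solved for precisely when
   p S_k = T_k (u - r S_k) for all k, where p, u are the constant terms of the diagonal of \<phi>_0
   and r that of \<rho>; conversely such data lift to an isomorphism.  So M(b) and M(c) are
   isomorphic iff one Moebius transformation z \<mapsto> p z / (u - r z) fixing 0 sends every S_k
   to T_k.  Rotating the quiver by l - 1 steps we may take l = 1; then S_2 = T_2 = 0 mod t, the
   point pairs (S_1, T_1) and (S_3, T_3) determine the transformation, and the condition at
   (S_4, T_4) is the stated divisibility. *)

lemma fps_X_mult_fps_shift_1:
  fixes f :: "'a::comm_ring_1 fps"
  assumes "fps_nth f 0 = 0"
  shows "fps_X * fps_shift 1 f = f"
  by (rule fps_ext) (use assms in auto)

lemma fps_X_dvd_iff: "fps_X dvd f \<longleftrightarrow> fps_nth (f :: 'a::comm_ring_1 fps) 0 = 0"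
  by (metis dvdE dvdI fps_X_mult_fps_shift_1 fps_X_mult_nth)

lemma mat2_nth [simp]:
  "mat2 a b c d $ 1 $ 1 = a" "mat2 a b c d $ 1 $ 2 = b"
  "mat2 a b c d $ 2 $ 1 = c" "mat2 a b c d $ 2 $ 2 = d"
  by (simp_all add: mat2_def)

lemma mat2_eq_iff: "mat2 a b c d = mat2 a' b' c' d' \<longleftrightarrow> a = a' \<and> b = b' \<and> c = c' \<and> d = d'"
  by (metis mat2_nth)

lemma mat2_cases:
  obtains a b c d where "(M :: Zmat) = mat2 a b c d"
proof
  show "M = mat2 (M $ 1 $ 1) (M $ 1 $ 2) (M $ 2 $ 1) (M $ 2 $ 2)"
    by (simp add: vec_eq_iff forall_2)
qed

lemma mat2_mult:
  "mat2 a b c d ** mat2 e f g h = mat2 (a * e + b * g) (a * f + b * h) (c * e + d * g) (c * f + d * h)"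
  by (simp add: vec_eq_iff forall_2 matrix_matrix_mult_def UNIV_2)

lemma det_mat2: "det (mat2 a b c d) = a * d - b * c"
  by (simp add: det_2)

lemma invertible_iff_fps_nth_det: "invertible (M :: Zmat) \<longleftrightarrow> fps_nth (det M) 0 \<noteq> 0"
proof
  assume "invertible M"
  then obtain M' where "M ** M' = mat 1" by (auto simp: invertible_def)
  then have "det M * det M' = 1" by (metis det_I det_mul)
  then show "fps_nth (det M) 0 \<noteq> 0" by (metis fps_is_unit_iff dvdI)
next
  assume det: "fps_nth (det M) 0 \<noteq> 0"
  obtain a b c d where M: "M = mat2 a b c d" by (rule mat2_cases)
  define v where "v = inverse (a * d - b * c)"
  have v: "(a * d - b * c) * v = 1"
    using det unfolding M det_mat2 v_def by (rule inverse_mult_eq_1')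
  have "mat 1 = mat2 (1 :: complex fps) 0 0 1"
    by (simp add: vec_eq_iff forall_2 mat_def)
  with v have "M ** mat2 (d * v) (- b * v) (- c * v) (a * v) = mat 1 \<and>
      mat2 (d * v) (- b * v) (- c * v) (a * v) ** M = mat 1"
    by (simp add: M mat2_mult mat2_eq_iff algebra_simps)
  then show "invertible M" unfolding invertible_def by blast
qed

(* [p s : u - r s] = [t : 1]: the fractional linear map with matrix [[p, 0], [-r, u]], which fixes
   0, sends s to t. *)
definition moebius_maps :: "complex \<Rightarrow> complex \<Rightarrow> complex \<Rightarrow> complex \<Rightarrow> complex \<Rightarrow> bool" where
  "moebius_maps p r u s t \<longleftrightarrow> p * s = t * (u - r * s)"

lemma moebius_maps_0 [simp]: "moebius_maps p r u 0 0"
  by (simp add: moebius_maps_def)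

lemma moebius_maps_add:
  assumes "moebius_maps p r u s t" and "\<gamma> * (u - r * s) - \<beta> * (p + r * t) = r * \<beta> * \<gamma>"
  shows "moebius_maps p r u (s + \<beta>) (t + \<gamma>)"
  using assms unfolding moebius_maps_def by algebra

(* In the coordinate 1/s the Moebius maps fixing 0 are the affine maps of nonzero slope; the
   right-hand side equates the two difference quotients ending at the third point. *)
lemma moebius_fixing_zero_three_points_iff:
  fixes s1 s2 s3 t1 t2 t3 :: complex
  assumes nonzero: "s1 \<noteq> 0" "s2 \<noteq> 0" "t1 \<noteq> 0" "t2 \<noteq> 0"
    and distinct: "s1 \<noteq> s2" "t1 \<noteq> t2"
  shows "(\<exists>p r u. p \<noteq> 0 \<and> u \<noteq> 0 \<and> moebius_maps p r u s1 t1 \<and> moebius_maps p r u s2 t2 \<and>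
            moebius_maps p r u s3 t3)
    \<longleftrightarrow> (s1 - s3) * t1 * s2 * (t3 - t2) = (t1 - t3) * s1 * t2 * (s3 - s2)"
    (is "?maps \<longleftrightarrow> ?D = ?D'")
proof
  assume ?maps
  then obtain p r u where "u \<noteq> 0" and m: "moebius_maps p r u s1 t1" "moebius_maps p r u s2 t2"
      "moebius_maps p r u s3 t3"
    by blast
  have "u * s1 * t1 * (?D - ?D') = 0"
    using m unfolding moebius_maps_def by algebra
  with \<open>u \<noteq> 0\<close> nonzero show "?D = ?D'" by simp
next
  assume D: "?D = ?D'"
  define p where "p = t1 * t2 * (s2 - s1)"
  define u where "u = s1 * s2 * (t2 - t1)"
  define r where "r = (t1 * u - s1 * p) / (s1 * t1)"
  have r: "s1 * t1 * r = t1 * u - s1 * p"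
    using nonzero unfolding r_def by simp
  have "moebius_maps p r u s1 t1"
    unfolding moebius_maps_def using r by algebra
  moreover have "s1 * t1 * (p * s2 - t2 * (u - r * s2)) = 0"
    using r unfolding p_def u_def by algebra
  then have "moebius_maps p r u s2 t2"
    unfolding moebius_maps_def using nonzero by simp
  moreover have "s1 * t1 * (p * s3 - t3 * (u - r * s3)) = 0"
    using r D unfolding p_def u_def by algebra
  then have "moebius_maps p r u s3 t3"
    unfolding moebius_maps_def using nonzero by simp
  moreover have "p \<noteq> 0" "u \<noteq> 0"
    using nonzero distinct unfolding p_def u_def by simp_all
  ultimately show ?maps by blast
qed

definition Bsum_partial :: "(int \<Rightarrow> complex fps) \<Rightarrow> nat \<Rightarrow> complex fps" where
  "Bsum_partial b k = (\<Sum>i<k. Bsum b (2 * int i + 1))"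

lemma Bsum_partial_0 [simp]: "Bsum_partial b 0 = 0"
  by (simp add: Bsum_partial_def)

lemma Bsum_partial_Suc: "Bsum_partial b (Suc k) = Bsum_partial b k + Bsum b (2 * int k + 1)"
  by (simp add: Bsum_partial_def)

lemma Bsum_partial_5_eq_sum: "Bsum_partial b 5 = (\<Sum>i\<in>{1..10}. b i)"
proof -
  have "{1..10::int} = {1, 2, 3, 4, 5, 6, 7, 8, 9, 10}"
    by (auto, presburger)
  then show ?thesis
    by (simp add: Bsum_partial_def Bsum_def cyc_def numeral_eq_Suc lessThan_Suc algebra_simps)
qed

(* For an isomorphism \<phi>, the numbers p, u, r are the constant terms of \<phi>_0 (1,1), \<phi>_0 (2,2)
   and \<phi>_1 (2,1). *)
definition moebius_equivalent :: "(int \<Rightarrow> complex fps) \<Rightarrow> (int \<Rightarrow> complex fps) \<Rightarrow> bool" where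
  "moebius_equivalent b c \<longleftrightarrow> (\<exists>p r u. p \<noteq> 0 \<and> u \<noteq> 0 \<and>
     (\<forall>k<5. moebius_maps p r u (fps_nth (Bsum_partial b k) 0) (fps_nth (Bsum_partial c k) 0)))"

lemma xmap_segment_entries:
  fixes A A1 A2 :: Zmat
  assumes "odd j"
    and "A1 ** xmap b j = xmap c j ** A" and "A2 ** xmap b (j + 1) = xmap c (j + 1) ** A1"
  shows "A $ 2 $ 1 = fps_X * A1 $ 2 $ 1" and "A2 $ 2 $ 1 = fps_X * A1 $ 2 $ 1"
    and "A2 $ 1 $ 1 = A $ 1 $ 1 + Bsum c j * A1 $ 2 $ 1"
    and "A2 $ 2 $ 2 = A $ 2 $ 2 - Bsum b j * A1 $ 2 $ 1"
    and "fps_X dvd Bsum c j * A $ 2 $ 2 - Bsum b j * A $ 1 $ 1 - Bsum b j * Bsum c j * A1 $ 2 $ 1"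
proof -
  obtain P Q R S where A: "A = mat2 P Q R S" by (rule mat2_cases)
  obtain P1 Q1 R1 S1 where A1: "A1 = mat2 P1 Q1 R1 S1" by (rule mat2_cases)
  obtain P2 Q2 R2 S2 where A2: "A2 = mat2 P2 Q2 R2 S2" by (rule mat2_cases)
  define \<beta>1 \<beta>2 \<gamma>1 \<gamma>2
    where entries: "\<beta>1 = cyc b j" "\<beta>2 = cyc b (j + 1)" "\<gamma>1 = cyc c j" "\<gamma>2 = cyc c (j + 1)"
  have B: "Bsum b j = \<beta>1 + \<beta>2" "Bsum c j = \<gamma>1 + \<gamma>2"
    by (simp_all add: Bsum_def entries)
  from assms have "A1 ** mat2 fps_X \<beta>1 0 1 = mat2 fps_X \<gamma>1 0 1 ** A"
    and "A2 ** mat2 1 \<beta>2 0 fps_X = mat2 1 \<gamma>2 0 fps_X ** A1"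
    by (simp_all add: xmap_def entries)
  then have x1: "P1 * fps_X = fps_X * P + \<gamma>1 * R" "P1 * \<beta>1 + Q1 = fps_X * Q + \<gamma>1 * S"
      "R1 * fps_X = R" "R1 * \<beta>1 + S1 = S"
    and x2: "P2 = P1 + \<gamma>2 * R1" "P2 * \<beta>2 + fps_X * Q2 = Q1 + \<gamma>2 * S1"
      "R2 = fps_X * R1" "R2 * \<beta>2 + fps_X * S2 = fps_X * S1"
    unfolding A A1 A2 mat2_mult mat2_eq_iff by algebra+
  have "fps_X * P1 = fps_X * (P + \<gamma>1 * R1)" and "fps_X * S2 = fps_X * (S1 - R1 * \<beta>2)"
    using x1 x2 by algebra+
  then have P1: "P1 = P + \<gamma>1 * R1" and S2: "S2 = S1 - R1 * \<beta>2"
    by simp_all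
  show "A $ 2 $ 1 = fps_X * A1 $ 2 $ 1" "A2 $ 2 $ 1 = fps_X * A1 $ 2 $ 1"
    "A2 $ 1 $ 1 = A $ 1 $ 1 + Bsum c j * A1 $ 2 $ 1"
    "A2 $ 2 $ 2 = A $ 2 $ 2 - Bsum b j * A1 $ 2 $ 1"
    using x1 x2 P1 S2 unfolding A A1 A2 B mat2_nth by algebra+
  have "(\<gamma>1 + \<gamma>2) * S - (\<beta>1 + \<beta>2) * P - (\<beta>1 + \<beta>2) * (\<gamma>1 + \<gamma>2) * R1 = fps_X * (Q2 - Q)"
    using x1 x2 P1 by algebra
  then show "fps_X dvd Bsum c j * A $ 2 $ 2 - Bsum b j * A $ 1 $ 1 - Bsum b j * Bsum c j * A1 $ 2 $ 1"
    unfolding A A1 B by simp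
qed

lemma xmap_commuting_family_invariant:
  fixes \<phi> :: "int \<Rightarrow> Zmat"
  assumes comm: "\<forall>j\<in>{1..10}. \<phi> (j mod 10) ** xmap b j = xmap c j ** \<phi> (j - 1)" and "k \<le> 4"
  defines "p \<equiv> fps_nth (\<phi> 0 $ 1 $ 1) 0" and "u \<equiv> fps_nth (\<phi> 0 $ 2 $ 2) 0"
    and "r \<equiv> fps_nth (\<phi> 1 $ 2 $ 1) 0"
  shows "\<phi> (2 * int k) $ 2 $ 1 = fps_X * \<phi> 1 $ 2 $ 1 \<and>
         fps_nth (\<phi> (2 * int k) $ 1 $ 1) 0 = p + r * fps_nth (Bsum_partial c k) 0 \<and>
         fps_nth (\<phi> (2 * int k) $ 2 $ 2) 0 = u - r * fps_nth (Bsum_partial b k) 0 \<and>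
         moebius_maps p r u (fps_nth (Bsum_partial b k) 0) (fps_nth (Bsum_partial c k) 0)"
proof -
  have comm': "\<phi> (j + 1) ** xmap b (j + 1) = xmap c (j + 1) ** \<phi> j" if "0 \<le> j" "j < 8" for j
    using comm[rule_format, of "j + 1"] that by simp
  have odd: "odd (2 * int k + 1)" for k
    by simp
  show ?thesis
    using \<open>k \<le> 4\<close>
  proof (induction k)
    case 0
    show ?case
      using xmap_segment_entries(1)[OF odd[of 0] comm'[of "2 * int 0"] comm'[of "2 * int 0 + 1"]]
      by (simp add: p_def u_def)
  next
    case (Suc k)
    have k: "0 \<le> 2 * int k" "2 * int k < 8" "0 \<le> 2 * int k + 1" "2 * int k + 1 < 8"
      using Suc.prems by simp_all
    with Suc.IH have IH: "\<phi> (2 * int k) $ 2 $ 1 = fps_X * \<phi> 1 $ 2 $ 1"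
        "fps_nth (\<phi> (2 * int k) $ 1 $ 1) 0 = p + r * fps_nth (Bsum_partial c k) 0"
        "fps_nth (\<phi> (2 * int k) $ 2 $ 2) 0 = u - r * fps_nth (Bsum_partial b k) 0"
        "moebius_maps p r u (fps_nth (Bsum_partial b k) 0) (fps_nth (Bsum_partial c k) 0)"
      by simp_all
    note seg = xmap_segment_entries[OF odd comm'[OF k(1,2)] comm'[OF k(3,4)]]
    have \<rho>: "\<phi> (2 * int k + 1) $ 2 $ 1 = \<phi> 1 $ 2 $ 1"
      using seg(1) IH(1) by simp
    have vertex: "2 * int (Suc k) = 2 * int k + 1 + 1"
      by simp
    have "moebius_maps p r u (fps_nth (Bsum_partial b (Suc k)) 0) (fps_nth (Bsum_partial c (Suc k)) 0)"
      unfolding Bsum_partial_Suc fps_add_nth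
    proof (rule moebius_maps_add[OF IH(4)])
      show "fps_nth (Bsum c (2 * int k + 1)) 0 * (u - r * fps_nth (Bsum_partial b k) 0)
            - fps_nth (Bsum b (2 * int k + 1)) 0 * (p + r * fps_nth (Bsum_partial c k) 0)
            = r * fps_nth (Bsum b (2 * int k + 1)) 0 * fps_nth (Bsum c (2 * int k + 1)) 0"
        using seg(5) IH(2,3) unfolding \<rho> fps_X_dvd_iff by (simp add: r_def)
    qed
    moreover have "fps_nth (\<phi> (2 * int k + 1 + 1) $ 1 $ 1) 0 = p + r * fps_nth (Bsum_partial c (Suc k)) 0"
      unfolding seg(3) \<rho> fps_add_nth fps_mult_nth_0 IH(2)
      by (simp add: Bsum_partial_Suc r_def algebra_simps)
    moreover have "fps_nth (\<phi> (2 * int k + 1 + 1) $ 2 $ 2) 0 = u - r * fps_nth (Bsum_partial b (Suc k)) 0"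
      unfolding seg(4) \<rho> fps_sub_nth fps_mult_nth_0 IH(3)
      by (simp add: Bsum_partial_Suc r_def algebra_simps)
    ultimately show ?case
      using seg(2) unfolding vertex \<rho> by simp
  qed
qed

lemma Miso_imp_moebius_equivalent:
  assumes "Miso b c"
  shows "moebius_equivalent b c"
proof -
  obtain \<phi> :: "int \<Rightarrow> Zmat" where inv: "\<forall>i\<in>{0..9}. invertible (\<phi> i)"
    and comm: "\<forall>j\<in>{1..10}. \<phi> (j mod 10) ** xmap b j = xmap c j ** \<phi> (j - 1)"
    using assms unfolding Miso_def by blast
  define p u r where "p = fps_nth (\<phi> 0 $ 1 $ 1) 0" and "u = fps_nth (\<phi> 0 $ 2 $ 2) 0"
    and "r = fps_nth (\<phi> 1 $ 2 $ 1) 0"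
  note invariant = xmap_commuting_family_invariant[OF comm, folded p_def u_def r_def]
  then have "\<forall>k<5. moebius_maps p r u (fps_nth (Bsum_partial b k) 0) (fps_nth (Bsum_partial c k) 0)"
    by auto
  moreover have "\<phi> 0 $ 2 $ 1 = fps_X * \<phi> 1 $ 2 $ 1"
    using invariant[of 0] by simp
  then have "fps_nth (det (\<phi> 0)) 0 = p * u"
    by (simp add: det_2 p_def u_def)
  with inv have "p * u \<noteq> 0"
    using invertible_iff_fps_nth_det by auto
  ultimately show ?thesis
    unfolding moebius_equivalent_def by auto
qed

lemma xmap_segment_construction:
  fixes b c :: "int \<Rightarrow> complex fps" and j :: int and P Q U P' Q' U' \<rho> :: "complex fps"
  defines "\<Omega> \<equiv> mat2 (P + cyc c j * \<rho>) (fps_X * Q + cyc c j * U - (P + cyc c j * \<rho>) * cyc b j)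
                  \<rho> (U - \<rho> * cyc b j)"
  assumes "odd j" and P': "P' = P + Bsum c j * \<rho>" and U': "U' = U - Bsum b j * \<rho>"
    and Q': "fps_X * Q' = fps_X * Q + Bsum c j * U - Bsum b j * P - Bsum b j * Bsum c j * \<rho>"
  shows "\<Omega> ** xmap b j = xmap c j ** mat2 P Q (fps_X * \<rho>) U"
    and "mat2 P Q (fps_X * \<rho>) U ** ymap b j = ymap c j ** \<Omega>"
    and "mat2 P' Q' (fps_X * \<rho>) U' ** xmap b (j + 1) = xmap c (j + 1) ** \<Omega>"
    and "\<Omega> ** ymap b (j + 1) = ymap c (j + 1) ** mat2 P' Q' (fps_X * \<rho>) U'"
    and "det \<Omega> = det (mat2 P Q (fps_X * \<rho>) U)"
proof -
  have maps: "xmap x j = mat2 fps_X (cyc x j) 0 1" "ymap x j = mat2 1 (- cyc x j) 0 fps_X"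
    "xmap x (j + 1) = mat2 1 (cyc x (j + 1)) 0 fps_X" "ymap x (j + 1) = mat2 fps_X (- cyc x (j + 1)) 0 1"
    for x
    using \<open>odd j\<close> by (simp_all add: xmap_def ymap_def)
  show "\<Omega> ** xmap b j = xmap c j ** mat2 P Q (fps_X * \<rho>) U"
    and "mat2 P Q (fps_X * \<rho>) U ** ymap b j = ymap c j ** \<Omega>"
    and "mat2 P' Q' (fps_X * \<rho>) U' ** xmap b (j + 1) = xmap c (j + 1) ** \<Omega>"
    and "\<Omega> ** ymap b (j + 1) = ymap c (j + 1) ** mat2 P' Q' (fps_X * \<rho>) U'"
    and "det \<Omega> = det (mat2 P Q (fps_X * \<rho>) U)"
    using Q' unfolding \<Omega>_def P' U' maps Bsum_def mat2_mult mat2_eq_iff det_mat2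
    by (algebra | simp add: algebra_simps)+
qed

lemma Miso_from_segments:
  fixes E \<Omega> :: "nat \<Rightarrow> Zmat"
  assumes period: "E 5 = E 0"
    and inv: "\<forall>k<5. invertible (E k) \<and> invertible (\<Omega> k)"
    and comm: "\<forall>k<5.
      \<Omega> k ** xmap b (2 * int k + 1) = xmap c (2 * int k + 1) ** E k \<and>
      E k ** ymap b (2 * int k + 1) = ymap c (2 * int k + 1) ** \<Omega> k \<and>
      E (Suc k) ** xmap b (2 * int k + 2) = xmap c (2 * int k + 2) ** \<Omega> k \<and>
      \<Omega> k ** ymap b (2 * int k + 2) = ymap c (2 * int k + 2) ** E (Suc k)"
  shows "Miso b c"
proof -
  define \<phi> where "\<phi> i = (if even i then E (nat (i div 2)) else \<Omega> (nat (i div 2)))" for i :: int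
  have \<phi>: "\<phi> (2 * int k) = E k" "\<phi> (2 * int k + 1) = \<Omega> k" for k
    by (simp_all add: \<phi>_def)
  have vertex: "\<exists>k<5. i = 2 * int k \<or> i = 2 * int k + 1" if "i \<in> {0..9}" for i
    using that by (intro exI[of _ "nat (i div 2)"]) auto
  have arrow: "\<exists>k<5. j = 2 * int k + 1 \<or> j = 2 * int k + 2" if "j \<in> {1..10}" for j
    using that by (intro exI[of _ "nat ((j - 1) div 2)"]) auto
  have "\<forall>i\<in>{0..9}. invertible (\<phi> i)"
    using vertex inv \<phi> by fastforce
  moreover have "\<phi> (j mod 10) ** xmap b j = xmap c j ** \<phi> (j - 1) \<and>
                 \<phi> (j - 1) ** ymap b j = ymap c j ** \<phi> (j mod 10)" if j: "j \<in> {1..10}" for j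
  proof -
    obtain k where "k < 5" and "j = 2 * int k + 1 \<or> j = 2 * int k + 2"
      using arrow[OF j] by blast
    then consider "j = 2 * int k + 1" | "j = 2 * int k + 2" "k < 4" | "j = 10" "k = 4"
      by linarith
    then show ?thesis
    proof cases
      case 1
      then have "\<phi> (j mod 10) = \<Omega> k" "\<phi> (j - 1) = E k"
        using \<phi> \<open>k < 5\<close> by simp_all
      then show ?thesis using comm \<open>k < 5\<close> 1 by simp
    next
      case 2
      then have "\<phi> (j mod 10) = E (Suc k)" "\<phi> (j - 1) = \<Omega> k"
        using \<phi>(1)[of "Suc k"] \<phi>(2)[of k] by (simp_all add: add.commute)
      then show ?thesis using comm \<open>k < 5\<close> 2 by simp
    next
      case 3
      then have "\<phi> (j mod 10) = E (Suc k)" "\<phi> (j - 1) = \<Omega> k"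
        using \<phi>(1)[of 0] \<phi>(2)[of 4] period by (simp_all add: eval_nat_numeral)
      then show ?thesis using comm[rule_format, of 4] 3 by simp
    qed
  qed
  ultimately show ?thesis
    unfolding Miso_def by blast
qed

(* The (1,2) entry Q k at vertex 2k is G k / t, and t divides G k because its constant term
   vanishes exactly by the Moebius condition at k. *)
lemma moebius_equivalent_imp_Miso:
  assumes "Bsum_partial b 5 = 0" and "Bsum_partial c 5 = 0" and "moebius_equivalent b c"
  shows "Miso b c"
proof -
  obtain p r u where "p \<noteq> 0" "u \<noteq> 0"
    and moebius: "\<forall>k<5. moebius_maps p r u (fps_nth (Bsum_partial b k) 0) (fps_nth (Bsum_partial c k) 0)"
    using assms(3) unfolding moebius_equivalent_def by blast
  define \<rho> where "\<rho> = fps_const r"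
  define P where "P k = fps_const p + Bsum_partial c k * \<rho>" for k
  define U where "U k = fps_const u - Bsum_partial b k * \<rho>" for k
  define G where "G k = Bsum_partial c k * fps_const u - Bsum_partial b k * fps_const p
    - Bsum_partial b k * Bsum_partial c k * \<rho>" for k
  define Q where "Q k = fps_shift 1 (G k)" for k
  define E where "E k = mat2 (P k) (Q k) (fps_X * \<rho>) (U k)" for k
  define \<Omega> where "\<Omega> k = mat2 (P k + cyc c (2 * int k + 1) * \<rho>)
      (fps_X * Q k + cyc c (2 * int k + 1) * U k - (P k + cyc c (2 * int k + 1) * \<rho>) * cyc b (2 * int k + 1))
      \<rho> (U k - \<rho> * cyc b (2 * int k + 1))" for k
  have G0: "fps_nth (G k) 0 = 0" if "k \<le> 5" for k
  proof (cases "k = 5")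
    case True
    then show ?thesis using assms(1,2) by (simp add: G_def)
  next
    case False
    with that moebius show ?thesis by (simp add: G_def \<rho>_def moebius_maps_def algebra_simps)
  qed
  have XQ: "fps_X * Q k = G k" if "k \<le> 5" for k
    using fps_X_mult_fps_shift_1 G0 that unfolding Q_def by blast
  have det_E: "fps_nth (det (E k)) 0 = p * u" if "k < 5" for k
    using G0[of k] that by (simp add: E_def det_mat2 P_def U_def G_def \<rho>_def algebra_simps)
  have odd: "odd (2 * int k + 1)" for k
    by simp
  have P_Suc: "P (Suc k) = P k + Bsum c (2 * int k + 1) * \<rho>" for k
    by (simp add: P_def Bsum_partial_Suc algebra_simps)
  have U_Suc: "U (Suc k) = U k - Bsum b (2 * int k + 1) * \<rho>" for k
    by (simp add: U_def Bsum_partial_Suc algebra_simps)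
  have Q_Suc: "fps_X * Q (Suc k) = fps_X * Q k + Bsum c (2 * int k + 1) * U k
      - Bsum b (2 * int k + 1) * P k - Bsum b (2 * int k + 1) * Bsum c (2 * int k + 1) * \<rho>"
    if "k < 5" for k
    using that by (simp add: XQ G_def P_def U_def Bsum_partial_Suc algebra_simps)
  note segment = xmap_segment_construction[OF odd P_Suc U_Suc Q_Suc, folded E_def \<Omega>_def]
  show ?thesis
  proof (rule Miso_from_segments)
    show "E 5 = E 0"
      using assms(1,2) by (simp add: E_def P_def U_def Q_def G_def)
    show "\<forall>k<5. invertible (E k) \<and> invertible (\<Omega> k)"
      using det_E segment(5) \<open>p \<noteq> 0\<close> \<open>u \<noteq> 0\<close> by (simp add: invertible_iff_fps_nth_det)
    show "\<forall>k<5.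
      \<Omega> k ** xmap b (2 * int k + 1) = xmap c (2 * int k + 1) ** E k \<and>
      E k ** ymap b (2 * int k + 1) = ymap c (2 * int k + 1) ** \<Omega> k \<and>
      E (Suc k) ** xmap b (2 * int k + 2) = xmap c (2 * int k + 2) ** \<Omega> k \<and>
      \<Omega> k ** ymap b (2 * int k + 2) = ymap c (2 * int k + 2) ** E (Suc k)"
      using segment(1-4) by (simp add: add.assoc)
  qed
qed

lemma Bsum_partial_nth_0_if_first_pair_dvd:
  assumes "Bsum_partial x 5 = 0" and "fps_X dvd Bsum x 1 + Bsum x 3"
  shows "fps_nth (Bsum_partial x 1) 0 = fps_nth (Bsum x 1) 0"
    and "fps_nth (Bsum_partial x 2) 0 = 0"
    and "fps_nth (Bsum_partial x 3) 0 = fps_nth (Bsum x 5) 0"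
    and "fps_nth (Bsum_partial x 3) 0 = - fps_nth (Bsum x 7 + Bsum x 9) 0"
    and "fps_nth (Bsum_partial x 3) 0 - fps_nth (Bsum_partial x 1) 0 = fps_nth (Bsum x 3 + Bsum x 5) 0"
    and "fps_nth (Bsum_partial x 4) 0 - fps_nth (Bsum_partial x 3) 0 = fps_nth (Bsum x 7) 0"
    and "fps_nth (Bsum_partial x 1) 0 - fps_nth (Bsum_partial x 4) 0 = fps_nth (Bsum x (- 1) + Bsum x 1) 0"
proof -
  have sum: "Bsum x 1 + Bsum x 3 + Bsum x 5 + Bsum x 7 + Bsum x 9 = 0"
    using assms(1) by (simp add: Bsum_partial_def numeral_eq_Suc lessThan_Suc add_ac)
  have partial: "Bsum_partial x 1 = Bsum x 1" "Bsum_partial x 2 = Bsum x 1 + Bsum x 3"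
    "Bsum_partial x 3 = Bsum x 1 + Bsum x 3 + Bsum x 5"
    "Bsum_partial x 4 = Bsum x 1 + Bsum x 3 + Bsum x 5 + Bsum x 7"
    by (simp_all add: Bsum_partial_def numeral_eq_Suc lessThan_Suc add_ac)
  have "Bsum x (- 1) = Bsum x 9"
    by (simp add: Bsum_def cyc_def)
  moreover have "fps_nth (Bsum x 1) 0 + fps_nth (Bsum x 3) 0 = 0"
    using assms(2) by (simp add: fps_X_dvd_iff)
  moreover have "fps_nth (Bsum x 1) 0 + fps_nth (Bsum x 3) 0 + fps_nth (Bsum x 5) 0
      + fps_nth (Bsum x 7) 0 + fps_nth (Bsum x 9) 0 = 0"
    using arg_cong[OF sum, of "\<lambda>f. fps_nth f 0"] by simp
  ultimately show "fps_nth (Bsum_partial x 1) 0 = fps_nth (Bsum x 1) 0"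
    and "fps_nth (Bsum_partial x 2) 0 = 0"
    and "fps_nth (Bsum_partial x 3) 0 = fps_nth (Bsum x 5) 0"
    and "fps_nth (Bsum_partial x 3) 0 = - fps_nth (Bsum x 7 + Bsum x 9) 0"
    and "fps_nth (Bsum_partial x 3) 0 - fps_nth (Bsum_partial x 1) 0 = fps_nth (Bsum x 3 + Bsum x 5) 0"
    and "fps_nth (Bsum_partial x 4) 0 - fps_nth (Bsum_partial x 3) 0 = fps_nth (Bsum x 7) 0"
    and "fps_nth (Bsum_partial x 1) 0 - fps_nth (Bsum_partial x 4) 0 = fps_nth (Bsum x (- 1) + Bsum x 1) 0"
    unfolding partial fps_add_nth by (simp_all add: eq_neg_iff_add_eq_0 algebra_simps)
qed

lemma Miso_iff_l_eq_1:
  assumes "Bsum_partial b 5 = 0" and "Bsum_partial c 5 = 0"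
    and "\<not> fps_X dvd Bsum b 1" and "fps_X dvd Bsum b 1 + Bsum b 3"
    and "\<not> fps_X dvd Bsum b 3 + Bsum b 5" and "\<not> fps_X dvd Bsum b 7 + Bsum b 9"
    and "\<not> fps_X dvd Bsum c 1" and "fps_X dvd Bsum c 1 + Bsum c 3"
    and "\<not> fps_X dvd Bsum c 3 + Bsum c 5" and "\<not> fps_X dvd Bsum c 7 + Bsum c 9"
  shows "Miso b c \<longleftrightarrow>
    fps_X dvd ((Bsum b (- 1) + Bsum b 1) * Bsum c 1 * Bsum b 5 * Bsum c 7
             - (Bsum c (- 1) + Bsum c 1) * Bsum b 1 * Bsum c 5 * Bsum b 7)"
proof -
  define S where "S k = fps_nth (Bsum_partial b k) 0" for k
  define T where "T k = fps_nth (Bsum_partial c k) 0" for k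
  note b = Bsum_partial_nth_0_if_first_pair_dvd[OF assms(1,4), folded S_def]
  note c = Bsum_partial_nth_0_if_first_pair_dvd[OF assms(2,8), folded T_def]
  have five: "(\<forall>k<5. P k) \<longleftrightarrow> P 0 \<and> P 1 \<and> P 2 \<and> P 3 \<and> P 4" for P :: "nat \<Rightarrow> bool"
    by (auto simp: less_Suc_eq numeral_eq_Suc)
  have "Miso b c \<longleftrightarrow> moebius_equivalent b c"
    using Miso_imp_moebius_equivalent moebius_equivalent_imp_Miso assms(1,2) by blast
  also have "\<dots> \<longleftrightarrow> (\<exists>p r u. p \<noteq> 0 \<and> u \<noteq> 0 \<and> moebius_maps p r u (S 1) (T 1) \<and>
                       moebius_maps p r u (S 3) (T 3) \<and> moebius_maps p r u (S 4) (T 4))"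
    unfolding moebius_equivalent_def five S_def[symmetric] T_def[symmetric] using b(2) c(2)
    by (simp add: S_def T_def)
  also have "\<dots> \<longleftrightarrow> (S 1 - S 4) * T 1 * S 3 * (T 4 - T 3) = (T 1 - T 4) * S 1 * T 3 * (S 4 - S 3)"
  proof (rule moebius_fixing_zero_three_points_iff)
    show "S 1 \<noteq> 0" "T 1 \<noteq> 0"
      using assms(3,7) b(1) c(1) fps_X_dvd_iff by metis+
    show "S 3 \<noteq> 0" "T 3 \<noteq> 0"
      using assms(6,10) b(4) c(4) fps_X_dvd_iff neg_equal_0_iff_equal by metis+
    show "S 1 \<noteq> S 3" "T 1 \<noteq> T 3"
      using assms(5,9) b(5) c(5) fps_X_dvd_iff right_minus_eq by metis+
  qed
  also have "\<dots> \<longleftrightarrow> fps_X dvd ((Bsum b (- 1) + Bsum b 1) * Bsum c 1 * Bsum b 5 * Bsum c 7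
                           - (Bsum c (- 1) + Bsum c 1) * Bsum b 1 * Bsum c 5 * Bsum b 7)"
    unfolding fps_X_dvd_iff fps_sub_nth fps_mult_nth_0 b(7)[symmetric] c(7)[symmetric]
      b(1)[symmetric] c(1)[symmetric] b(3)[symmetric] c(3)[symmetric] b(6)[symmetric] c(6)[symmetric]
    by (rule eq_iff_diff_eq_0)
  finally show ?thesis .
qed

lemma cyc_mod_cong: "j mod 10 = k mod 10 \<Longrightarrow> cyc b j = cyc b k"
  unfolding cyc_def by (metis mod_diff_cong)

lemma xmap_mod_cong:
  assumes "j mod 10 = k mod 10"
  shows "xmap b j = xmap b k" and "ymap b j = ymap b k"
proof -
  have "odd j \<longleftrightarrow> odd k"
    using assms by (metis even_iff_mod_2_eq_zero mod_mod_cancel even_numeral)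
  then show "xmap b j = xmap b k" and "ymap b j = ymap b k"
    by (simp_all add: xmap_def ymap_def cyc_mod_cong[OF assms])
qed

definition cyc_shift :: "int \<Rightarrow> (int \<Rightarrow> 'a) \<Rightarrow> int \<Rightarrow> 'a" where
  "cyc_shift d b i = cyc b (i + d)"

lemma cyc_cyc_shift [simp]: "cyc (cyc_shift d b) j = cyc b (j + d)"
proof -
  have "cyc (cyc_shift d b) j = cyc b ((j - 1) mod 10 + 1 + d)"
    by (simp add: cyc_def[of "cyc_shift d b"] cyc_shift_def)
  also have "\<dots> = cyc b (j + d)"
    by (rule cyc_mod_cong) (metis add.assoc diff_add_cancel mod_add_left_eq)
  finally show ?thesis .
qed

lemma Bsum_cyc_shift [simp]: "Bsum (cyc_shift d b) j = Bsum b (j + d)"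
  by (simp add: Bsum_def add_ac)

lemma xmap_cyc_shift:
  assumes "even d"
  shows "xmap (cyc_shift d b) j = xmap b (j + d)" and "ymap (cyc_shift d b) j = ymap b (j + d)"
  using assms by (simp_all add: xmap_def ymap_def)

lemma sum_cyc_shift: "(\<Sum>i\<in>{1..10}. cyc_shift d b i) = (\<Sum>i\<in>{1..10}. b i)"
proof -
  define \<sigma> where "\<sigma> i = (i + d - 1) mod 10 + 1" for i :: int
  have "bij_betw \<sigma> {1..10} {1..10}"
    by (rule bij_betw_byWitness[where f' = "\<lambda>i. (i - d - 1) mod 10 + 1"])
      (auto simp: \<sigma>_def mod_simps)
  moreover have "cyc_shift d b i = b (\<sigma> i)" for i
    by (simp add: cyc_shift_def cyc_def \<sigma>_def add_diff_eq)
  ultimately show ?thesis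
    using sum.reindex_bij_betw by simp
qed

lemma Miso_cyc_shift:
  assumes "even d" and "Miso b c"
  shows "Miso (cyc_shift d b) (cyc_shift d c)"
proof -
  obtain \<phi> :: "int \<Rightarrow> Zmat" where inv: "\<forall>i\<in>{0..9}. invertible (\<phi> i)"
    and comm: "\<forall>j\<in>{1..10}. \<phi> (j mod 10) ** xmap b j = xmap c j ** \<phi> (j - 1) \<and>
                              \<phi> (j - 1) ** ymap b j = ymap c j ** \<phi> (j mod 10)"
    using assms(2) unfolding Miso_def by blast
  define \<psi> where "\<psi> i = \<phi> ((i + d) mod 10)" for i
  have "\<forall>i\<in>{0..9}. invertible (\<psi> i)"
    using inv by (simp add: \<psi>_def)
  moreover have "\<psi> (j mod 10) ** xmap (cyc_shift d b) j = xmap (cyc_shift d c) j ** \<psi> (j - 1) \<and>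
                 \<psi> (j - 1) ** ymap (cyc_shift d b) j = ymap (cyc_shift d c) j ** \<psi> (j mod 10)" for j
  proof -
    define j' where "j' = (j + d - 1) mod 10 + 1"
    have j'_mod: "j' mod 10 = (j + d) mod 10" and j'_pred: "j' - 1 = (j - 1 + d) mod 10"
      by (simp_all add: j'_def mod_simps algebra_simps)
    have "j' \<in> {1..10}"
      by (simp add: j'_def)
    with comm have "\<phi> (j' mod 10) ** xmap b j' = xmap c j' ** \<phi> (j' - 1) \<and>
                    \<phi> (j' - 1) ** ymap b j' = ymap c j' ** \<phi> (j' mod 10)"
      by blast
    moreover have "\<psi> (j mod 10) = \<phi> ((j + d) mod 10)" "\<psi> (j - 1) = \<phi> ((j - 1 + d) mod 10)"
      by (simp_all add: \<psi>_def mod_simps)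
    ultimately show ?thesis
      unfolding xmap_cyc_shift[OF assms(1)] xmap_mod_cong[OF j'_mod] j'_mod j'_pred by simp
  qed
  ultimately show ?thesis
    unfolding Miso_def by blast
qed

lemma Miso_cyc_shift_iff:
  assumes "even d"
  shows "Miso (cyc_shift d b) (cyc_shift d c) \<longleftrightarrow> Miso b c"
proof
  have cyc_back: "cyc (cyc_shift (- d) (cyc_shift d x)) = cyc x" for x :: "int \<Rightarrow> complex fps"
    by (simp add: fun_eq_iff)
  assume "Miso (cyc_shift d b) (cyc_shift d c)"
  then have "Miso (cyc_shift (- d) (cyc_shift d b)) (cyc_shift (- d) (cyc_shift d c))"
    by (rule Miso_cyc_shift[rotated]) (use assms in simp)
  then show "Miso b c"
    by (simp only: Miso_def xmap_def ymap_def cyc_back)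
qed (rule Miso_cyc_shift[OF assms])

theorem theorem2p8:
  fixes b c :: "int \<Rightarrow> complex fps" and l :: int
  assumes "(\<Sum>i\<in>{1..10}. b i) = 0" and "(\<Sum>i\<in>{1..10}. c i) = 0"
    and "\<forall>i. odd i \<longrightarrow> \<not> fps_X dvd Bsum b i"
    and "\<forall>i. odd i \<longrightarrow> \<not> fps_X dvd Bsum c i"
    and "odd l"
    and "fps_X dvd Bsum b l + Bsum b (l + 2)"
    and "\<forall>i. odd i \<and> i mod 10 \<noteq> l mod 10 \<longrightarrow> \<not> fps_X dvd Bsum b i + Bsum b (i + 2)"
    and "fps_X dvd Bsum c l + Bsum c (l + 2)"
    and "\<forall>i. odd i \<and> i mod 10 \<noteq> l mod 10 \<longrightarrow> \<not> fps_X dvd Bsum c i + Bsum c (i + 2)"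
  shows "Miso b c \<longleftrightarrow>
    fps_X dvd ((Bsum b (l - 2) + Bsum b l) * Bsum c l * Bsum b (l + 4) * Bsum c (l + 6)
             - (Bsum c (l - 2) + Bsum c l) * Bsum b l * Bsum c (l + 4) * Bsum b (l + 6))"
proof -
  define d where "d = l - 1"
  have "even d"
    using assms(5) by (simp add: d_def)
  have pairs: "\<not> fps_X dvd Bsum x (l + 2) + Bsum x (l + 4)" "\<not> fps_X dvd Bsum x (l + 6) + Bsum x (l + 8)"
    if "\<forall>i. odd i \<and> i mod 10 \<noteq> l mod 10 \<longrightarrow> \<not> fps_X dvd Bsum x i + Bsum x (i + 2)" for x
  proof -
    have "(l + 2) mod 10 \<noteq> l mod 10" "(l + 6) mod 10 \<noteq> l mod 10"
      by presburger+
    then show "\<not> fps_X dvd Bsum x (l + 2) + Bsum x (l + 4)" "\<not> fps_X dvd Bsum x (l + 6) + Bsum x (l + 8)"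
      using that[rule_format, of "l + 2"] that[rule_format, of "l + 6"] assms(5) by (simp_all add: add.assoc)
  qed
  have "Miso b c \<longleftrightarrow> Miso (cyc_shift d b) (cyc_shift d c)"
    using Miso_cyc_shift_iff[OF \<open>even d\<close>] by simp
  also have "\<dots> \<longleftrightarrow> fps_X dvd
      ((Bsum (cyc_shift d b) (- 1) + Bsum (cyc_shift d b) 1) * Bsum (cyc_shift d c) 1
         * Bsum (cyc_shift d b) 5 * Bsum (cyc_shift d c) 7
     - (Bsum (cyc_shift d c) (- 1) + Bsum (cyc_shift d c) 1) * Bsum (cyc_shift d b) 1
         * Bsum (cyc_shift d c) 5 * Bsum (cyc_shift d b) 7)"
    by (rule Miso_iff_l_eq_1)
      (use assms pairs in \<open>simp_all add: Bsum_partial_5_eq_sum sum_cyc_shift d_def add_ac\<close>)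
  finally show ?thesis
    by (simp add: d_def add_ac)
qed

end
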